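(* Let $\delta\in(0,1)$. The meta-algorithm described in the context, with the commitment subroutine \textsc{CommitUnknown} (parameter $\delta$), guarantees, with probability at least $1-\delta/3$, \[ R(\ell^\star)\le 1+20\ln T\,\ln(T/\delta). \]
   Context: Robust dynamic pricing: there are $T$ rounds and an unknown valuation $v^\star\in[0,1)$. At each round $t$ the seller posts a price $p_t\in[0,1]$. The true sale indicator is $y_t=\mathbbm 1\{p_t\le v^\star\}$; the seller observes $\sigma_t\in\{0,1\}$, which differs from $y_t$ in at most $C$ rounds. The adversary decides whether to corrupt round $t$ based on the history and on the seller's distribution over $p_t$, but not on the realized $p_t$. Meta-algorithm: let $D=\lceil\log_2 T\rceil$. Consider the complete binary tree of intervals of depth $D$ with root $[0,1)$, where each non-leaf node $[L,R)$ has children $[L,M)$ and $[M,R)$, $M=(L+R)/2$; the depth-$D$ nodes are the leaves (each of length at most $1/T$), and $\ell^\star$ is the unique leaf containing $v^\star$. The algorithm keeps a current node $I$, initially the root, and repeats until the horizon ends: if $I=[L,R)$ is not a leaf, it performs a safety check — post $L$ and observe $\sigma_L$, post $R$ and observe $\sigma_R$; the check fails if $\sigma_L=0$ or $\sigma_R=1$ (by convention the query at $L=0$ and the query at $R=1$ always count as passing). On failure $I$ becomes its parent; otherwise it posts $M$, observes $\sigma_M$, and $I$ becomes $[M,R)$ if $\sigma_M=1$ and $[L,M)$ if $\sigma_M=0$. If $I$ is a leaf, the commitment subroutine is run on $I$; if it returns FAIL, $I$ becomes its parent. \textsc{CommitUnknown} with parameter $\delta$: each leaf $\ell$ has a counter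 $s_\ell$, initialized to $0$ at the start of the horizon and never reset. On leaf $\ell=[L,R)$ it repeats the following two-round block: post $L$ and observe $\sigma_L$; if $\sigma_L=0$ return FAIL. Increase $s_\ell$ by $1$ and sample, independently of everything else, $B\sim\mathrm{Bernoulli}(\min\{4\ln(T/\delta)/s_\ell,1\})$. If $B=0$, post $L$ and observe $\sigma_L$, returning FAIL if $\sigma_L=0$; if $B=1$, post $R$ and observe $\sigma_R$, returning FAIL if $\sigma_R=1$. For a leaf $\ell$, $Q(\ell)$ is the set of rounds during which the commitment subroutine runs on $\ell$, and $R(\ell)=\sum_{t\in Q(\ell)}(v^\star-p_t\mathbbm 1\{p_t\le v^\star\})$. *)

theory Defs
  imports "HOL-Probability.Probability"
begin

text \<open>Nodes of the complete binary tree of depth D are pairs (d,k) with d \<le> D and k < 2^d,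
  standing for the interval [k/2^d, (k+1)/2^d).  The root is (0,0).\<close>

definition depthD :: "nat \<Rightarrow> nat" where
  "depthD T = nat \<lceil>log 2 (real T)\<rceil>"

definition nodeL :: "nat \<times> nat \<Rightarrow> real" where
  "nodeL n = real (snd n) / 2 ^ fst n"

definition nodeR :: "nat \<times> nat \<Rightarrow> real" where
  "nodeR n = (real (snd n) + 1) / 2 ^ fst n"

definition nodeM :: "nat \<times> nat \<Rightarrow> real" where
  "nodeM n = (nodeL n + nodeR n) / 2"

definition parent :: "nat \<times> nat \<Rightarrow> nat \<times> nat" where
  "parent n = (fst n - 1, snd n div 2)"

definition child :: "nat \<times> nat \<Rightarrow> bool \<Rightarrow> nat \<times> nat" where
  "child n b = (Suc (fst n), 2 * snd n + (if b then 1 else 0))"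

definition is_leaf :: "nat \<Rightarrow> nat \<times> nat \<Rightarrow> bool" where
  "is_leaf T n \<longleftrightarrow> fst n = depthD T"

definition leaf_of :: "nat \<Rightarrow> real \<Rightarrow> nat \<times> nat" where
  "leaf_of T v = (depthD T, nat \<lfloor>v * 2 ^ depthD T\<rfloor>)"

text \<open>Phases of the algorithm (what it is about to post in the next round):
  SafeL: first query (at L) of the safety check;
  SafeR b: second query (at R) of the safety check, b = whether the query at L passed;
  Mid: query at the midpoint M;
  ComFirst: first round of a CommitUnknown block (post L);
  ComSecond: second round of a CommitUnknown block (post R w.p. q, L otherwise).\<close>
datatype phase = SafeL | SafeR bool | Mid | ComFirst | ComSecond

datatype state = St (node: "nat \<times> nat") (ph: phase) (cnt: "nat \<Rightarrow> nat")

definition start_phase :: "nat \<Rightarrow> nat \<times> nat \<Rightarrow> phase" where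
  "start_phase T n = (if is_leaf T n then ComFirst else SafeL)"

definition goto :: "nat \<Rightarrow> nat \<times> nat \<Rightarrow> (nat \<Rightarrow> nat) \<Rightarrow> state" where
  "goto T n c = St n (start_phase T n) c"

definition init_state :: "nat \<Rightarrow> state" where
  "init_state T = goto T (0, 0) (\<lambda>_. 0)"

definition commit_prob :: "nat \<Rightarrow> real \<Rightarrow> nat \<Rightarrow> real" where
  "commit_prob T \<delta> s = min (4 * ln (real T / \<delta>) / real s) 1"

text \<open>The seller's distribution over the price posted in the next round.
  Counters are indexed by the index k of the leaf (D,k).\<close>
definition price_dist :: "nat \<Rightarrow> real \<Rightarrow> state \<Rightarrow> real pmf" where
  "price_dist T \<delta> st = (case ph st of
      SafeL \<Rightarrow> return_pmf (nodeL (node st))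
    | SafeR _ \<Rightarrow> return_pmf (nodeR (node st))
    | Mid \<Rightarrow> return_pmf (nodeM (node st))
    | ComFirst \<Rightarrow> return_pmf (nodeL (node st))
    | ComSecond \<Rightarrow> map_pmf (\<lambda>B. if B then nodeR (node st) else nodeL (node st))
                     (bernoulli_pmf (commit_prob T \<delta> (cnt st (snd (node st))))))"

text \<open>Deterministic update of the algorithm's state after posting price p and observing \<sigma>.
  Checks at L = 0 and at R = 1 always pass (safety check convention).\<close>
definition step :: "nat \<Rightarrow> state \<Rightarrow> real \<Rightarrow> bool \<Rightarrow> state" where
  "step T st p \<sigma> = (let n = node st; c = cnt st in
     case ph st of
       SafeL \<Rightarrow> St n (SafeR (nodeL n = 0 \<or> \<sigma>)) c
     | SafeR okL \<Rightarrow>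
         (if okL \<and> (nodeR n = 1 \<or> \<not> \<sigma>) then St n Mid c else goto T (parent n) c)
     | Mid \<Rightarrow> goto T (child n \<sigma>) c
     | ComFirst \<Rightarrow>
         (if \<not> \<sigma> then goto T (parent n) c
          else St n ComSecond (c(snd n := Suc (c (snd n)))))
     | ComSecond \<Rightarrow>
         (if p = nodeL n then (if \<not> \<sigma> then goto T (parent n) c else St n ComFirst c)
          else (if \<sigma> then goto T (parent n) c else St n ComFirst c)))"

text \<open>Histories are lists of (posted price, observed feedback).\<close>
type_synonym history = "(real \<times> bool) list"

definition alg_state :: "nat \<Rightarrow> history \<Rightarrow> state" where
  "alg_state T h = fold (\<lambda>(p, \<sigma>) st. step T st p \<sigma>) h (init_state T)"

definition ncorr :: "real \<Rightarrow> history \<Rightarrow> nat" where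
  "ncorr v h = length (filter (\<lambda>(p, \<sigma>). \<sigma> \<noteq> (p \<le> v)) h)"

text \<open>An adversary maps the history and the seller's distribution over the current price
  to the decision whether to corrupt the current round (it does not see the realised price).\<close>
type_synonym adversary = "history \<Rightarrow> real pmf \<Rightarrow> bool"

fun hist_pmf :: "nat \<Rightarrow> real \<Rightarrow> real \<Rightarrow> nat \<Rightarrow> adversary \<Rightarrow> nat \<Rightarrow> history pmf" where
  "hist_pmf T \<delta> v C adv 0 = return_pmf []"
| "hist_pmf T \<delta> v C adv (Suc t) =
     bind_pmf (hist_pmf T \<delta> v C adv t) (\<lambda>h.
       let P = price_dist T \<delta> (alg_state T h);
           corrupt = (adv h P \<and> ncorr v h < C)
       in map_pmf (\<lambda>p. h @ [(p, (p \<le> v) \<noteq> corrupt)]) P)"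

text \<open>R(leaf): regret accumulated in the rounds during which the commitment subroutine
  runs on the given leaf.\<close>
definition in_commit :: "state \<Rightarrow> nat \<times> nat \<Rightarrow> bool" where
  "in_commit st l \<longleftrightarrow> node st = l \<and> (ph st = ComFirst \<or> ph st = ComSecond)"

definition leaf_regret :: "nat \<Rightarrow> real \<Rightarrow> nat \<times> nat \<Rightarrow> history \<Rightarrow> real" where
  "leaf_regret T v l h =
     (\<Sum>t<length h. if in_commit (alg_state T (take t h)) l
                     then v - (if fst (h ! t) \<le> v then fst (h ! t) else 0) else 0)"

end

theory Submission
  imports Defs "HOL-Analysis.Harmonic_Numbers"
begin

text \<open>
  While the commitment subroutine runs on the leaf \<ell>\<star> = [L, R) it posts L or R.
  Since L \<le> v < R and v - L \<le> 1/T, a round at L costs at most 1/T and a round at R at most 1,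
  so R(\<ell>\<star>) \<le> 1 + N, where N is the number of posts of R on \<ell>\<star>.

  Once the counter of \<ell>\<star> has reached s, R is posted with probability q(s), whatever the
  adversary does, because it does not see the realised price.  Hence 2^N / \<Prod>(1 + q(j)), the
  product taken over the j \<le> s for which the draw has been made, is a martingale starting at 1,
  and E[2^N] \<le> \<Prod>(j \<le> T) (1 + q(j)) \<le> exp (4 ln(T/\<delta>) (1 + ln T)) by the harmonic bound.
  Markov's inequality then gives P(N > 20 ln T ln(T/\<delta>)) \<le> (\<delta>/T)^2 \<le> \<delta>/3 for T \<ge> 2;
  for T = 1 no R is ever posted.
\<close>

lemma alg_state_Nil [simp]: "alg_state T [] = init_state T"
  by (simp add: alg_state_def)

lemma alg_state_snoc [simp]: "alg_state T (h @ [x]) = step T (alg_state T h) (fst x) (snd x)"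
  by (simp add: alg_state_def case_prod_beta)

definition wf_state :: "nat \<Rightarrow> state \<Rightarrow> bool" where
  "wf_state T st \<longleftrightarrow>
     ((ph st = ComFirst \<or> ph st = ComSecond) \<longrightarrow> is_leaf T (node st)) \<and>
     (ph st = ComSecond \<longrightarrow> cnt st (snd (node st)) \<ge> 1)"

lemma wf_state_init: "wf_state T (init_state T)"
  by (auto simp: wf_state_def init_state_def goto_def start_phase_def)

lemma wf_state_step: "wf_state T st \<Longrightarrow> wf_state T (step T st p \<sigma>)"
  by (cases "ph st") (auto simp: wf_state_def step_def goto_def start_phase_def Let_def)

lemma wf_state_alg_state: "wf_state T (alg_state T h)"
  by (induction h rule: rev_induct) (simp_all add: wf_state_init wf_state_step)

lemma cnt_step_le: "cnt (step T st p \<sigma>) k \<le> Suc (cnt st k)"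
  by (cases "ph st") (auto simp: step_def goto_def Let_def)

lemma cnt_alg_state_le: "cnt (alg_state T h) k \<le> length h"
proof (induction h rule: rev_induct)
  case (snoc x h)
  then show ?case using cnt_step_le[of T "alg_state T h" "fst x" "snd x" k] by simp
qed (simp add: init_state_def goto_def)

lemma set_pmf_hist_pmf:
  "h \<in> set_pmf (hist_pmf T \<delta> v C adv t) \<Longrightarrow>
     length h = t \<and> (\<forall>i<t. fst (h ! i) \<in> set_pmf (price_dist T \<delta> (alg_state T (take i h))))"
proof (induction t arbitrary: h)
  case (Suc t)
  then obtain h' p \<sigma> where "h' \<in> set_pmf (hist_pmf T \<delta> v C adv t)"
    and "p \<in> set_pmf (price_dist T \<delta> (alg_state T h'))" and "h = h' @ [(p, \<sigma>)]"
    by (auto simp: Let_def)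
  with Suc.IH show ?case by (auto simp: nth_append less_Suc_eq)
qed simp

lemma real_le_two_pow_depthD: "T \<ge> 1 \<Longrightarrow> real T \<le> 2 ^ depthD T"
proof -
  assume "T \<ge> 1"
  then have "real T = 2 powr log 2 (real T)" by simp
  also have "\<dots> \<le> 2 powr real (depthD T)"
    unfolding depthD_def by (intro powr_mono real_nat_ceiling_ge) auto
  finally show ?thesis by (simp add: powr_realpow)
qed

lemma leaf_of_bounds:
  assumes "T \<ge> 1" "0 \<le> v"
  shows "nodeL (leaf_of T v) \<le> v" "v < nodeR (leaf_of T v)" "v - nodeL (leaf_of T v) \<le> 1 / real T"
proof -
  define D where "D = depthD T"
  define k where "k = \<lfloor>v * 2 ^ D\<rfloor>"
  have L: "nodeL (leaf_of T v) = k / 2 ^ D" and R: "nodeR (leaf_of T v) = (k + 1) / 2 ^ D"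
    using assms(2) by (simp_all add: nodeL_def nodeR_def leaf_of_def D_def k_def)
  have k: "k \<le> v * 2 ^ D" "v * 2 ^ D < k + 1"
    unfolding k_def by linarith+
  then show "nodeL (leaf_of T v) \<le> v" "v < nodeR (leaf_of T v)"
    unfolding L R by (simp_all add: field_simps)
  have "v - nodeL (leaf_of T v) = (v * 2 ^ D - k) / 2 ^ D"
    unfolding L by (simp add: field_simps)
  also have "\<dots> \<le> 1 / 2 ^ D"
    using k by (intro divide_right_mono) auto
  also have "\<dots> \<le> 1 / real T"
    using real_le_two_pow_depthD[OF assms(1)] assms(1) by (simp add: D_def frac_le)
  finally show "v - nodeL (leaf_of T v) \<le> 1 / real T" .
qed

lemma nodeL_ne_nodeR: "nodeL n \<noteq> nodeR n"
  by (simp add: nodeL_def nodeR_def divide_simps)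

definition draw_pending :: "nat \<Rightarrow> real \<Rightarrow> state \<Rightarrow> bool" where
  "draw_pending T v st \<longleftrightarrow> ph st = ComSecond \<and> node st = leaf_of T v"

definition posts_right_end :: "nat \<Rightarrow> real \<Rightarrow> state \<Rightarrow> real \<Rightarrow> bool" where
  "posts_right_end T v st p \<longleftrightarrow> draw_pending T v st \<and> p \<noteq> nodeL (leaf_of T v)"

definition num_right_posts :: "nat \<Rightarrow> real \<Rightarrow> history \<Rightarrow> nat" where
  "num_right_posts T v h =
     (\<Sum>i<length h. of_bool (posts_right_end T v (alg_state T (take i h)) (fst (h ! i))))"

lemma num_right_posts_snoc:
  "num_right_posts T v (h @ [x]) =
     num_right_posts T v h + of_bool (posts_right_end T v (alg_state T h) (fst x))"
  unfolding num_right_posts_def by (simp add: nth_append)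

lemma num_right_posts_singleton: "num_right_posts T v [x] = 0"
  by (simp add: num_right_posts_def posts_right_end_def draw_pending_def
        init_state_def goto_def start_phase_def)

lemma round_regret_le:
  assumes "T \<ge> 1" "0 \<le> v" "v < 1" and "p \<in> set_pmf (price_dist T \<delta> st)"
  shows "(if in_commit st (leaf_of T v) then v - (if p \<le> v then p else 0) else 0)
           \<le> 1 / real T + of_bool (posts_right_end T v st p)"
proof (cases "in_commit st (leaf_of T v)")
  case True
  let ?l = "leaf_of T v"
  have "p = nodeL ?l \<or> (p = nodeR ?l \<and> draw_pending T v st)"
    using True assms(4) by (auto simp: in_commit_def draw_pending_def price_dist_def)
  then show ?thesis
    using True leaf_of_bounds[OF assms(1,2)] nodeL_ne_nodeR[of ?l] assms(3)
    by (auto simp: posts_right_end_def)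
qed simp

lemma leaf_regret_le_num_right_posts:
  assumes "T \<ge> 1" "0 \<le> v" "v < 1" and "h \<in> set_pmf (hist_pmf T \<delta> v C adv t)"
  shows "leaf_regret T v (leaf_of T v) h \<le> real t / real T + real (num_right_posts T v h)"
proof -
  have len: "length h = t"
    and prices: "\<forall>i<t. fst (h ! i) \<in> set_pmf (price_dist T \<delta> (alg_state T (take i h)))"
    using set_pmf_hist_pmf[OF assms(4)] by auto
  have "leaf_regret T v (leaf_of T v) h
      \<le> (\<Sum>i<t. 1 / real T + of_bool (posts_right_end T v (alg_state T (take i h)) (fst (h ! i))))"
    unfolding leaf_regret_def len using prices by (intro sum_mono round_regret_le[OF assms(1-3)]) auto
  also have "\<dots> = real t / real T + real (num_right_posts T v h)"
    by (simp add: sum.distrib num_right_posts_def len)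
  finally show ?thesis .
qed

definition settled_count :: "nat \<Rightarrow> real \<Rightarrow> state \<Rightarrow> nat" where
  "settled_count T v st = cnt st (snd (leaf_of T v)) - of_bool (draw_pending T v st)"

lemma settled_count_step_pending:
  "draw_pending T v st \<Longrightarrow> settled_count T v (step T st p \<sigma>) = cnt st (snd (leaf_of T v))"
  by (auto simp: settled_count_def draw_pending_def step_def goto_def start_phase_def Let_def)

lemma settled_count_step:
  assumes "wf_state T st" "\<not> draw_pending T v st"
  shows "settled_count T v (step T st p \<sigma>) = settled_count T v st"
proof (cases "ph st = ComFirst \<and> node st \<noteq> leaf_of T v")
  case True
  \<comment> \<open>Counters are indexed by the position of a node within its level only.\<close>
  with assms(1) have "snd (node st) \<noteq> snd (leaf_of T v)"
    by (auto simp: wf_state_def is_leaf_def leaf_of_def prod_eq_iff)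
  with True show ?thesis
    by (auto simp: settled_count_def draw_pending_def step_def goto_def start_phase_def Let_def)
next
  case False
  with assms(2) show ?thesis
    by (cases "ph st")
      (auto simp: settled_count_def draw_pending_def step_def goto_def start_phase_def Let_def)
qed

definition commit_growth :: "nat \<Rightarrow> real \<Rightarrow> nat \<Rightarrow> real" where
  "commit_growth T \<delta> s = (\<Prod>j\<in>{1..s}. 1 + commit_prob T \<delta> j)"

lemma commit_growth_Suc:
  "commit_growth T \<delta> (Suc s) = commit_growth T \<delta> s * (1 + commit_prob T \<delta> (Suc s))"
  by (simp add: commit_growth_def prod.cl_ivl_Suc)

definition doubling_martingale :: "nat \<Rightarrow> real \<Rightarrow> real \<Rightarrow> history \<Rightarrow> ennreal" where
  "doubling_martingale T \<delta> v h =
     ennreal (2 ^ num_right_posts T v h / commit_growth T \<delta> (settled_count T v (alg_state T h)))"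

lemma harm_le_one_plus_ln: "n \<ge> 1 \<Longrightarrow> harm n \<le> 1 + ln (real n)"
  using euler_mascheroni_sequence_decreasing[of 1 n] by (simp add: harm_def)

context
  fixes T :: nat and \<delta> :: real
  assumes ln_ratio_nonneg: "0 \<le> ln (real T / \<delta>)"
begin

lemma commit_prob_nonneg: "0 \<le> commit_prob T \<delta> s"
  using ln_ratio_nonneg by (simp add: commit_prob_def)

lemma commit_growth_pos: "0 < commit_growth T \<delta> s"
  unfolding commit_growth_def using commit_prob_nonneg by (intro prod_pos) (simp add: add_pos_nonneg)

lemma commit_growth_mono: "s \<le> s' \<Longrightarrow> commit_growth T \<delta> s \<le> commit_growth T \<delta> s'"
  unfolding commit_growth_def using commit_prob_nonneg by (intro prod_mono2) auto

lemma commit_growth_le_exp: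
  assumes "n \<ge> 1"
  shows "commit_growth T \<delta> n \<le> exp (4 * ln (real T / \<delta>) * (1 + ln (real n)))"
proof -
  have "(\<Sum>j\<in>{1..n}. commit_prob T \<delta> j) \<le> (\<Sum>j\<in>{1..n}. 4 * ln (real T / \<delta>) * inverse (real j))"
    by (intro sum_mono) (simp add: commit_prob_def divide_inverse)
  also have "\<dots> = 4 * ln (real T / \<delta>) * harm n"
    by (simp add: harm_def sum_distrib_left)
  also have "\<dots> \<le> 4 * ln (real T / \<delta>) * (1 + ln (real n))"
    using harm_le_one_plus_ln[OF assms] ln_ratio_nonneg by (intro mult_left_mono) auto
  finally have sum_le:
    "(\<Sum>j\<in>{1..n}. commit_prob T \<delta> j) \<le> 4 * ln (real T / \<delta>) * (1 + ln (real n))" .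
  have "commit_growth T \<delta> n \<le> (\<Prod>j\<in>{1..n}. exp (commit_prob T \<delta> j))"
    unfolding commit_growth_def using commit_prob_nonneg
    by (intro prod_mono) (auto simp: exp_ge_add_one_self add_nonneg_nonneg)
  also have "\<dots> = exp (\<Sum>j\<in>{1..n}. commit_prob T \<delta> j)"
    by (simp add: exp_sum)
  also have "\<dots> \<le> exp (4 * ln (real T / \<delta>) * (1 + ln (real n)))"
    using sum_le by simp
  finally show ?thesis .
qed

lemma nn_integral_martingale_factor:
  assumes "wf_state T st"
  shows "(\<integral>\<^sup>+p. ennreal (2 ^ of_bool (posts_right_end T v st p)
                / commit_growth T \<delta> (settled_count T v (step T st p (\<sigma> p)))) \<partial>price_dist T \<delta> st)
         = ennreal (1 / commit_growth T \<delta> (settled_count T v st))"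
proof (cases "draw_pending T v st")
  case True
  define s where "s = cnt st (snd (leaf_of T v))"
  define q where "q = commit_prob T \<delta> s"
  have q: "0 \<le> q" "q \<le> 1"
    using commit_prob_nonneg by (simp_all add: q_def commit_prob_def)
  have "s \<ge> 1"
    using assms True by (auto simp: wf_state_def draw_pending_def s_def)
  then have growth: "commit_growth T \<delta> s = commit_growth T \<delta> (settled_count T v st) * (1 + q)"
    using True commit_growth_Suc[of T \<delta> "s - 1"] by (simp add: settled_count_def s_def q_def)
  have "price_dist T \<delta> st =
      map_pmf (\<lambda>B. if B then nodeR (leaf_of T v) else nodeL (leaf_of T v)) (bernoulli_pmf q)"
    using True unfolding draw_pending_def by (simp add: price_dist_def q_def s_def, simp only: True)
  then have "(\<integral>\<^sup>+p. ennreal (2 ^ of_bool (posts_right_end T v st p)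
                / commit_growth T \<delta> (settled_count T v (step T st p (\<sigma> p)))) \<partial>price_dist T \<delta> st)
      = ennreal (2 / commit_growth T \<delta> s) * q + ennreal (1 / commit_growth T \<delta> s) * (1 - q)"
    using True q not_sym[OF nodeL_ne_nodeR[of "leaf_of T v"]]
    by (simp add: posts_right_end_def settled_count_step_pending s_def)
  also have "\<dots> = ennreal ((1 + q) / commit_growth T \<delta> s)"
    using q commit_growth_pos[of s] by (simp add: field_simps flip: ennreal_mult' ennreal_plus)
  also have "(1 + q) / commit_growth T \<delta> s = 1 / commit_growth T \<delta> (settled_count T v st)"
    using q by (simp add: growth)
  finally show ?thesis .
next
  case False
  then have "\<And>p. \<not> posts_right_end T v st p"
    by (simp add: posts_right_end_def)
  with False show ?thesis
    by (simp add: settled_count_step[OF assms False] measure_pmf.emeasure_space_1)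
qed

text \<open>
  The adversary decides whether to corrupt a round before its price is drawn, so within a round
  the feedback is a function \<sigma> of the price alone.
\<close>
lemma nn_integral_doubling_martingale_snoc:
  "(\<integral>\<^sup>+p. doubling_martingale T \<delta> v (h @ [(p, \<sigma> p)]) \<partial>price_dist T \<delta> (alg_state T h))
     = doubling_martingale T \<delta> v h"
proof -
  let ?st = "alg_state T h"
  have "doubling_martingale T \<delta> v (h @ [(p, \<sigma> p)]) = ennreal (2 ^ num_right_posts T v h) *
      ennreal (2 ^ of_bool (posts_right_end T v ?st p)
                / commit_growth T \<delta> (settled_count T v (step T ?st p (\<sigma> p))))" for p
    by (simp add: doubling_martingale_def num_right_posts_snoc power_add flip: ennreal_mult')
  then have "(\<integral>\<^sup>+p. doubling_martingale T \<delta> v (h @ [(p, \<sigma> p)]) \<partial>price_dist T \<delta> ?st)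
      = ennreal (2 ^ num_right_posts T v h) * ennreal (1 / commit_growth T \<delta> (settled_count T v ?st))"
    by (simp add: nn_integral_cmult nn_integral_martingale_factor wf_state_alg_state)
  also have "\<dots> = doubling_martingale T \<delta> v h"
    by (simp add: doubling_martingale_def flip: ennreal_mult')
  finally show ?thesis .
qed

lemma nn_integral_doubling_martingale:
  "(\<integral>\<^sup>+h. doubling_martingale T \<delta> v h \<partial>hist_pmf T \<delta> v C adv t) = 1"
proof (induction t)
  case 0
  then show ?case
    by (simp add: doubling_martingale_def num_right_posts_def settled_count_def draw_pending_def
          init_state_def goto_def start_phase_def commit_growth_def)
next
  case (Suc t)
  then show ?case
    by (simp add: Let_def nn_integral_doubling_martingale_snoc)
qed

lemma nn_integral_two_pow_num_right_posts_le:
  "(\<integral>\<^sup>+h. ennreal (2 ^ num_right_posts T v h) \<partial>hist_pmf T \<delta> v C adv t) \<le> commit_growth T \<delta> t"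
proof -
  have "(\<integral>\<^sup>+h. ennreal (2 ^ num_right_posts T v h) \<partial>hist_pmf T \<delta> v C adv t)
      \<le> (\<integral>\<^sup>+h. ennreal (commit_growth T \<delta> t) * doubling_martingale T \<delta> v h
            \<partial>hist_pmf T \<delta> v C adv t)"
  proof (intro nn_integral_mono_AE, unfold AE_measure_pmf_iff, intro ballI)
    fix h assume h: "h \<in> set_pmf (hist_pmf T \<delta> v C adv t)"
    let ?G = "commit_growth T \<delta> (settled_count T v (alg_state T h))"
    have "settled_count T v (alg_state T h) \<le> cnt (alg_state T h) (snd (leaf_of T v))"
      by (simp add: settled_count_def)
    also have "\<dots> \<le> length h"
      by (rule cnt_alg_state_le)
    also have "\<dots> = t"
      using set_pmf_hist_pmf[OF h] by simp
    finally have "?G \<le> commit_growth T \<delta> t"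
      by (rule commit_growth_mono)
    then have "2 ^ num_right_posts T v h \<le> commit_growth T \<delta> t * (2 ^ num_right_posts T v h / ?G)"
      using commit_growth_pos[of "settled_count T v (alg_state T h)"] by (simp add: field_simps)
    then show "ennreal (2 ^ num_right_posts T v h)
        \<le> ennreal (commit_growth T \<delta> t) * doubling_martingale T \<delta> v h"
      using commit_growth_pos[of t]
      by (simp add: doubling_martingale_def ennreal_leI flip: ennreal_mult')
  qed
  also have "\<dots> = commit_growth T \<delta> t"
    by (simp add: nn_integral_cmult nn_integral_doubling_martingale)
  finally show ?thesis .
qed

lemma prob_num_right_posts_gt_le:
  "measure_pmf.prob (hist_pmf T \<delta> v C adv t) {h. a < real (num_right_posts T v h)}
     \<le> commit_growth T \<delta> t / 2 powr a"
proof -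
  let ?M = "measure_pmf (hist_pmf T \<delta> v C adv t)"
  have "{h. a < real (num_right_posts T v h)}
      \<subseteq> {h. 1 \<le> ennreal (1 / 2 powr a) * ennreal (2 ^ num_right_posts T v h)}"
  proof safe
    fix h assume "a < real (num_right_posts T v h)"
    then have "2 powr a \<le> 2 ^ num_right_posts T v h"
      by (simp add: powr_realpow[symmetric])
    then show "1 \<le> ennreal (1 / 2 powr a) * ennreal (2 ^ num_right_posts T v h)"
      by (simp add: field_simps flip: ennreal_mult ennreal_1)
  qed
  then have "emeasure ?M {h. a < real (num_right_posts T v h)}
        \<le> ennreal (1 / 2 powr a)
          * (\<integral>\<^sup>+h. ennreal (2 ^ num_right_posts T v h) * indicator UNIV h \<partial>?M)"
    by (intro order.trans[OF emeasure_mono nn_integral_Markov_inequality]) auto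
  also have "\<dots> \<le> ennreal (1 / 2 powr a) * commit_growth T \<delta> t"
    using nn_integral_two_pow_num_right_posts_le by (intro mult_left_mono) auto
  finally show ?thesis
    using commit_growth_pos[of t] by (simp add: measure_pmf.emeasure_eq_measure flip: ennreal_mult)
qed

end

lemma exp_div_two_powr_le_third:
  fixes T :: nat
  assumes "T \<ge> 2" "0 < \<delta>" "\<delta> < 1"
  shows "exp (4 * ln (real T / \<delta>) * (1 + ln (real T)))
           / 2 powr (20 * ln (real T) * ln (real T / \<delta>)) \<le> \<delta> / 3"
proof -
  define L where "L = ln (real T / \<delta>)"
  define l where "l = ln (real T)"
  have "1 \<le> real T / \<delta>"
    using assms by (simp add: field_simps)
  then have "0 \<le> L"
    by (simp add: L_def)
  have "ln 2 \<le> l"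
    using assms by (simp add: l_def)
  then have "28 / 3 * (2 / 3) \<le> (20 * ln 2 - 4) * l"
    using ln2_ge_two_thirds by (intro mult_mono) auto
  then have "L * 6 \<le> L * ((20 * ln 2 - 4) * l)"
    using \<open>0 \<le> L\<close> by (intro mult_left_mono) auto
  then have exponent: "4 * L * (1 + l) - 20 * l * L * ln 2 \<le> 2 * (- L)"
    by (simp add: algebra_simps)
  have "exp (4 * L * (1 + l)) / 2 powr (20 * l * L) = exp (4 * L * (1 + l) - 20 * l * L * ln 2)"
    by (simp add: powr_def exp_diff)
  also have "\<dots> \<le> exp (2 * (- L))"
    using exponent by simp
  also have "\<dots> = (\<delta> / real T) ^ 2"
    using exp_of_nat_mult[of 2 "- L"] assms by (simp add: L_def exp_minus)
  also have "\<dots> \<le> \<delta> ^ 2 / 4"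
    unfolding power_divide using power_mono[of 2 "real T" 2] assms by (intro divide_left_mono) auto
  also have "\<dots> \<le> \<delta> / 3"
    using mult_left_mono[of \<delta> 1 \<delta>] assms by (simp add: power2_eq_square)
  finally show ?thesis
    by (simp add: L_def l_def)
qed

lemma prob_many_right_posts_le:
  assumes "T \<ge> 1" "0 < \<delta>" "\<delta> < 1"
  shows "measure_pmf.prob (hist_pmf T \<delta> v C adv T)
           {h. 20 * ln (real T) * ln (real T / \<delta>) < real (num_right_posts T v h)} \<le> \<delta> / 3"
proof (cases "T = 1")
  case True
  \<comment> \<open>Markov's bound is useless here since the threshold is 0.\<close>
  have "num_right_posts T v h = 0" if "h \<in> set_pmf (hist_pmf T \<delta> v C adv T)" for h
    using set_pmf_hist_pmf[OF that] True by (auto simp: length_Suc_conv num_right_posts_singleton)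
  then have "set_pmf (hist_pmf T \<delta> v C adv T)
      \<inter> {h. 20 * ln (real T) * ln (real T / \<delta>) < real (num_right_posts T v h)} = {}"
    using True by auto
  then show ?thesis
    using assms by (simp flip: measure_pmf_zero_iff)
next
  case False
  have "1 \<le> real T / \<delta>"
    using assms by (simp add: field_simps)
  then have ln_nonneg: "0 \<le> ln (real T / \<delta>)"
    by simp
  have "measure_pmf.prob (hist_pmf T \<delta> v C adv T)
      {h. 20 * ln (real T) * ln (real T / \<delta>) < real (num_right_posts T v h)}
      \<le> commit_growth T \<delta> T / 2 powr (20 * ln (real T) * ln (real T / \<delta>))"
    by (rule prob_num_right_posts_gt_le[OF ln_nonneg])
  also have "\<dots> \<le> exp (4 * ln (real T / \<delta>) * (1 + ln (real T)))
                      / 2 powr (20 * ln (real T) * ln (real T / \<delta>))"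
    using assms by (intro divide_right_mono commit_growth_le_exp[OF ln_nonneg]) auto
  also have "\<dots> \<le> \<delta> / 3"
    using False assms by (intro exp_div_two_powr_le_third) auto
  finally show ?thesis .
qed

lemma prob_ge_one_minus_prob_gt:
  fixes p :: "'a pmf" and f g :: "'a \<Rightarrow> real"
  assumes "\<And>x. x \<in> set_pmf p \<Longrightarrow> g x \<le> a \<Longrightarrow> f x \<le> b"
  shows "measure_pmf.prob p {x. f x \<le> b} \<ge> 1 - measure_pmf.prob p {x. a < g x}"
proof -
  have "1 - measure_pmf.prob p {x. a < g x} = measure_pmf.prob p {x. g x \<le> a}"
    using measure_pmf.prob_compl[of "{x. a < g x}" p] by (simp add: set_diff_eq not_less)
  also have "\<dots> = measure_pmf.prob p ({x. g x \<le> a} \<inter> set_pmf p)"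
    by (simp add: measure_Int_set_pmf)
  also have "\<dots> \<le> measure_pmf.prob p {x. f x \<le> b}"
    using assms by (intro measure_pmf.finite_measure_mono) auto
  finally show ?thesis .
qed

theorem lemma5p2:
  fixes T C :: nat and \<delta> v :: real and adv :: adversary
  assumes "T \<ge> 1" and "0 < \<delta>" and "\<delta> < 1" and "0 \<le> v" and "v < 1"
  shows "measure_pmf.prob (hist_pmf T \<delta> v C adv T)
           {h. leaf_regret T v (leaf_of T v) h \<le> 1 + 20 * ln (real T) * ln (real T / \<delta>)}
         \<ge> 1 - \<delta> / 3"
proof -
  let ?a = "20 * ln (real T) * ln (real T / \<delta>)"
  have "measure_pmf.prob (hist_pmf T \<delta> v C adv T) {h. leaf_regret T v (leaf_of T v) h \<le> 1 + ?a}
      \<ge> 1 - measure_pmf.prob (hist_pmf T \<delta> v C adv T) {h. ?a < real (num_right_posts T v h)}"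
  proof (rule prob_ge_one_minus_prob_gt)
    fix h assume "h \<in> set_pmf (hist_pmf T \<delta> v C adv T)" "real (num_right_posts T v h) \<le> ?a"
    then show "leaf_regret T v (leaf_of T v) h \<le> 1 + ?a"
      using leaf_regret_le_num_right_posts[OF assms(1,4,5)] assms(1) by fastforce
  qed
  with prob_many_right_posts_le[OF assms(1-3), where v = v and C = C and adv = adv] show ?thesis
    by linarith
qed

end
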